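(* Let $t$ be a positive rational number and let $G$ be a minimally $t$-tough split graph whose vertex set is partitioned into a clique $C$ and an independent set $I$. Let $e=uv$ be an edge with $u,v\in C$, and let $S\subseteq V(G)$ be a witness set for $e$ (in the sense defined in the context). Then \[ S=\big(C\setminus\{u,v\}\big)\cup\{w\in I \mid uw\in E(G),\ vw\in E(G)\}. \]
   Context: All graphs are finite, simple and undirected. A graph is split if its vertex set can be partitioned into a clique and an independent set. $\omega(H)$ denotes the number of components of $H$. A cutset of $G$ is a vertex set $S$ with $G-S$ disconnected. For positive real $t$, $G$ is $t$-tough if $\omega(G-S)\le |S|/t$ for every cutset $S$; the toughness $\tau(G)$ is the largest such $t$, with $\tau(K_n)=\infty$ for all $n\ge1$. $G$ is minimally $t$-tough if $\tau(G)=t$ and $\tau(G-e)<t$ for every edge $e$. For a minimally $t$-tough graph $G$ and an edge $e$, a witness set for $e$ is a set $S\subseteq V(G)$ such that either $e$ is a bridge of $G$ and $S=\emptyset$, or $e$ is not a bridge of $G$, $\omega(G-S)\le |S|/t$, $\omega((G-e)-S)>|S|/t$, and $e$ is a bridge in $G-S$. (For every edge of a minimally $t$-tough graph a witness set exists.) *)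

theory Defs
  imports Complex_Main
begin

definition graph :: "'a set \<Rightarrow> ('a \<Rightarrow> 'a \<Rightarrow> bool) \<Rightarrow> bool" where
  "graph V E \<longleftrightarrow> finite V \<and> (\<forall>x y. E x y \<longrightarrow> E y x) \<and> (\<forall>x. \<not> E x x)
     \<and> (\<forall>x y. E x y \<longrightarrow> x \<in> V \<and> y \<in> V)"

definition conn :: "'a set \<Rightarrow> ('a \<Rightarrow> 'a \<Rightarrow> bool) \<Rightarrow> 'a rel" where
  "conn W E = {(x, y). x \<in> W \<and> y \<in> W \<and> (\<lambda>a b. a \<in> W \<and> b \<in> W \<and> E a b)\<^sup>*\<^sup>* x y}"

definition ncomp :: "'a set \<Rightarrow> ('a \<Rightarrow> 'a \<Rightarrow> bool) \<Rightarrow> nat" where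
  "ncomp W E = card (W // conn W E)"

definition del_edge :: "('a \<Rightarrow> 'a \<Rightarrow> bool) \<Rightarrow> 'a \<Rightarrow> 'a \<Rightarrow> ('a \<Rightarrow> 'a \<Rightarrow> bool)" where
  "del_edge E u v = (\<lambda>x y. E x y \<and> {x, y} \<noteq> {u, v})"

definition cutset :: "'a set \<Rightarrow> ('a \<Rightarrow> 'a \<Rightarrow> bool) \<Rightarrow> 'a set \<Rightarrow> bool" where
  "cutset V E S \<longleftrightarrow> S \<subseteq> V \<and> ncomp (V - S) E > 1"

definition tough :: "'a set \<Rightarrow> ('a \<Rightarrow> 'a \<Rightarrow> bool) \<Rightarrow> real \<Rightarrow> bool" where
  "tough V E t \<longleftrightarrow> (\<forall>S. cutset V E S \<longrightarrow> real (ncomp (V - S) E) \<le> real (card S) / t)"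

text \<open>tau(G) = t (t a positive real): G is t-tough but not t'-tough for any t' > t.
  (This excludes complete graphs, whose toughness is infinite.)\<close>
definition toughness_eq :: "'a set \<Rightarrow> ('a \<Rightarrow> 'a \<Rightarrow> bool) \<Rightarrow> real \<Rightarrow> bool" where
  "toughness_eq V E t \<longleftrightarrow> tough V E t \<and> (\<forall>t'. t' > t \<longrightarrow> \<not> tough V E t')"

text \<open>tau(G - e) < t, for positive t, is equivalent to G - e not being t-tough.\<close>
definition minimally_tough :: "'a set \<Rightarrow> ('a \<Rightarrow> 'a \<Rightarrow> bool) \<Rightarrow> real \<Rightarrow> bool" where
  "minimally_tough V E t \<longleftrightarrow> toughness_eq V E t \<and>
     (\<forall>x y. E x y \<longrightarrow> \<not> tough V (del_edge E x y) t)"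

definition is_bridge :: "'a set \<Rightarrow> ('a \<Rightarrow> 'a \<Rightarrow> bool) \<Rightarrow> 'a \<Rightarrow> 'a \<Rightarrow> bool" where
  "is_bridge V E u v \<longleftrightarrow> u \<in> V \<and> v \<in> V \<and> E u v \<and> ncomp V (del_edge E u v) > ncomp V E"

definition witness_set :: "'a set \<Rightarrow> ('a \<Rightarrow> 'a \<Rightarrow> bool) \<Rightarrow> real \<Rightarrow> 'a \<Rightarrow> 'a \<Rightarrow> 'a set \<Rightarrow> bool" where
  "witness_set V E t u v S \<longleftrightarrow> S \<subseteq> V \<and>
     ((is_bridge V E u v \<and> S = {}) \<or>
      (\<not> is_bridge V E u v \<and>
       real (ncomp (V - S) E) \<le> real (card S) / t \<and>
       real (ncomp (V - S) (del_edge E u v)) > real (card S) / t \<and>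
       is_bridge (V - S) E u v))"

definition split_partition :: "'a set \<Rightarrow> ('a \<Rightarrow> 'a \<Rightarrow> bool) \<Rightarrow> 'a set \<Rightarrow> 'a set \<Rightarrow> bool" where
  "split_partition V E C I \<longleftrightarrow> C \<union> I = V \<and> C \<inter> I = {} \<and>
     (\<forall>x\<in>C. \<forall>y\<in>C. x \<noteq> y \<longrightarrow> E x y) \<and> (\<forall>x\<in>I. \<forall>y\<in>I. \<not> E x y)"

end

theory Submission
  imports Defs
begin

text \<open>If a vertex \<open>w\<close> of the right-hand side survived in
  \<open>G - S\<close>, the path \<open>u w v\<close> would keep \<open>uv\<close> from being a bridge of \<open>G - S\<close>; so the right-hand side
  lies in \<open>S\<close>. Conversely, a vertex \<open>x \<in> S\<close> outside the right-hand side lies in \<open>I\<close> and misses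
  one endpoint, say \<open>b\<close>, of \<open>uv\<close>; let \<open>a\<close> be the other one. Exchanging \<open>x\<close> for \<open>a\<close> gives a set
  \<open>T\<close> of the same size in whose complement \<open>x\<close> is isolated. Removing \<open>a\<close> from \<open>(G - S) - e\<close>
  destroys at most one component and re-inserting the isolated \<open>x\<close> creates one, so
  \<open>\<omega>(G - T) \<ge> \<omega>((G - S) - e) > |S|/t = |T|/t\<close>, contradicting the \<open>t\<close>-toughness of \<open>G\<close>.\<close>

lemma card_le_card_quotient:
  assumes "equiv W R" "finite W" "Q \<subseteq> W"
    and "\<And>p q. p \<in> Q \<Longrightarrow> q \<in> Q \<Longrightarrow> (p, q) \<in> R \<Longrightarrow> p = q"
  shows "card Q \<le> card (W // R)"
proof (rule card_inj_on_le)
  show "inj_on (\<lambda>p. R `` {p}) Q"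
  proof (rule inj_onI)
    fix p q assume "p \<in> Q" "q \<in> Q" "R `` {p} = R `` {q}"
    then have "(p, q) \<in> R" using assms(3) eq_equiv_class_iff[OF assms(1)] by blast
    then show "p = q" using assms(4) \<open>p \<in> Q\<close> \<open>q \<in> Q\<close> by blast
  qed
  show "(\<lambda>p. R `` {p}) ` Q \<subseteq> W // R" using assms(3) by (auto simp: quotient_def)
  show "finite (W // R)" using assms(1,2) by (simp add: finite_quotient equiv_type)
qed

lemma ex_transversal:
  assumes "equiv W R"
  obtains Q where "Q \<subseteq> W" "\<And>p q. p \<in> Q \<Longrightarrow> q \<in> Q \<Longrightarrow> (p, q) \<in> R \<Longrightarrow> p = q"
    and "card Q = card (W // R)"
proof -
  define f where "f K = (SOME p. p \<in> K)" for K :: "'a set"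
  have f: "f K \<in> K" if "K \<in> W // R" for K
    using in_quotient_imp_non_empty[OF assms that] unfolding f_def by (simp add: some_in_eq)
  have same_class: "K = K'" if "K \<in> W // R" "K' \<in> W // R" "p \<in> K" "p \<in> K'" for K K' p
    using quotient_disj[OF assms that(1,2)] that(3,4) by blast
  have "inj_on f (W // R)"
  proof (rule inj_onI)
    fix K K' assume "K \<in> W // R" "K' \<in> W // R" "f K = f K'"
    then show "K = K'" using f same_class by metis
  qed
  have "f ` (W // R) \<subseteq> W"
    using f in_quotient_imp_subset[OF assms] by blast
  moreover have "p = q"
    if pq: "p \<in> f ` (W // R)" "q \<in> f ` (W // R)" and "(p, q) \<in> R" for p q
  proof -
    obtain K K' where K: "K \<in> W // R" "K' \<in> W // R" "p = f K" "q = f K'"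
      using pq by blast
    then have "q \<in> K" using in_quotient_imp_closed[OF assms] f \<open>(p, q) \<in> R\<close> by blast
    then show ?thesis using K f same_class by metis
  qed
  moreover have "card (f ` (W // R)) = card (W // R)"
    using \<open>inj_on f (W // R)\<close> by (rule card_image)
  ultimately show ?thesis by (rule that)
qed

lemma conn_subset: "conn W E \<subseteq> W \<times> W"
  by (auto simp: conn_def)

lemma conn_trans: "(x, y) \<in> conn W E \<Longrightarrow> (y, z) \<in> conn W E \<Longrightarrow> (x, z) \<in> conn W E"
  unfolding conn_def by (auto elim: rtranclp_trans)

lemma conn_sym:
  assumes "symp E" "(x, y) \<in> conn W E"
  shows "(y, x) \<in> conn W E"
proof -
  let ?P = "\<lambda>a b. a \<in> W \<and> b \<in> W \<and> E a b"
  have "symp ?P" using assms(1) by (auto simp: symp_def)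
  then show ?thesis using assms(2) by (auto simp: conn_def dest: symp_rtranclp[THEN sympD])
qed

lemma conn_equiv:
  assumes "symp E"
  shows "equiv W (conn W E)"
proof (rule equivI)
  show "conn W E \<subseteq> W \<times> W" by (rule conn_subset)
  show "refl_on W (conn W E)" by (rule refl_onI) (auto simp: conn_def)
  show "sym (conn W E)" by (rule symI) (rule conn_sym[OF assms])
  show "trans (conn W E)" by (rule transI) (rule conn_trans)
qed

lemma conn_mono: "W \<subseteq> W' \<Longrightarrow> conn W E \<subseteq> conn W' E"
  unfolding conn_def by (auto elim!: rtranclp_mono[THEN predicate2D, rotated])

lemma conn_subsetI:
  assumes "\<And>x y. x \<in> W \<Longrightarrow> y \<in> W \<Longrightarrow> E x y \<Longrightarrow> (x, y) \<in> conn W E'"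
  shows "conn W E \<subseteq> conn W E'"
proof
  fix p assume "p \<in> conn W E"
  then obtain x y where p: "p = (x, y)" "x \<in> W"
    and path: "(\<lambda>a b. a \<in> W \<and> b \<in> W \<and> E a b)\<^sup>*\<^sup>* x y"
    by (auto simp: conn_def)
  from path have "(x, y) \<in> conn W E'"
  proof induction
    case base
    show ?case using p(2) by (simp add: conn_def)
  next
    case (step y z)
    then have "(y, z) \<in> conn W E'" using assms by blast
    with step.IH show ?case by (rule conn_trans)
  qed
  then show "p \<in> conn W E'" using p(1) by simp
qed

lemma conn_cong:
  assumes "\<And>x y. x \<in> W \<Longrightarrow> y \<in> W \<Longrightarrow> E x y \<longleftrightarrow> E' x y"
  shows "conn W E = conn W E'"
proof -
  have "(\<lambda>a b. a \<in> W \<and> b \<in> W \<and> E a b) = (\<lambda>a b. a \<in> W \<and> b \<in> W \<and> E' a b)"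
    using assms by blast
  then show ?thesis by (simp add: conn_def)
qed

lemma conn_insert_isolated:
  assumes "x \<notin> W" "\<And>y. y \<in> W \<Longrightarrow> \<not> E x y \<and> \<not> E y x"
  shows "conn (insert x W) E = insert (x, x) (conn W E)"
proof
  show "insert (x, x) (conn W E) \<subseteq> conn (insert x W) E"
    using conn_mono[of W "insert x W" E] by (auto simp: conn_def)
  show "conn (insert x W) E \<subseteq> insert (x, x) (conn W E)"
  proof
    fix p assume "p \<in> conn (insert x W) E"
    then obtain y z where p: "p = (y, z)" "y \<in> insert x W"
      and path: "(\<lambda>a b. a \<in> insert x W \<and> b \<in> insert x W \<and> E a b)\<^sup>*\<^sup>* y z"
      by (auto simp: conn_def)
    from path have "(y, z) = (x, x) \<or> (y, z) \<in> conn W E"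
    proof induction
      case base
      then show ?case using p(2) by (auto simp: conn_def)
    next
      case (step z z')
      then show ?case using assms conn_trans[of y z W E z'] by (auto simp: conn_def)
    qed
    then show "p \<in> insert (x, x) (conn W E)" using p(1) by simp
  qed
qed

lemma card_le_ncomp:
  assumes "finite W" "symp E" "Q \<subseteq> W"
    and "\<And>p q. p \<in> Q \<Longrightarrow> q \<in> Q \<Longrightarrow> (p, q) \<in> conn W E \<Longrightarrow> p = q"
  shows "card Q \<le> ncomp W E"
  unfolding ncomp_def by (rule card_le_card_quotient[OF conn_equiv[OF assms(2)] assms(1,3,4)])

lemma ncomp_pos:
  assumes "finite W" "W \<noteq> {}"
  shows "0 < ncomp W E"
proof -
  have "finite (W // conn W E)" using assms(1) conn_subset by (rule finite_quotient)
  moreover have "W // conn W E \<noteq> {}" using assms(2) by simp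
  ultimately show ?thesis by (simp add: ncomp_def card_gt_0_iff)
qed

lemma ncomp_cong:
  assumes "\<And>x y. x \<in> W \<Longrightarrow> y \<in> W \<Longrightarrow> E x y \<longleftrightarrow> E' x y"
  shows "ncomp W E = ncomp W E'"
proof -
  have "conn W E = conn W E'" using assms by (rule conn_cong)
  then show ?thesis by (simp add: ncomp_def)
qed

lemma ncomp_insert_isolated:
  assumes "finite W" "x \<notin> W" "\<And>y. y \<in> W \<Longrightarrow> \<not> E x y \<and> \<not> E y x"
  shows "ncomp (insert x W) E = Suc (ncomp W E)"
proof -
  have "insert x W // insert (x, x) (conn W E) = insert {x} (W // conn W E)"
    using assms(2) conn_subset[of W E] by (auto simp: quotient_def Image_def)
  moreover have "{x} \<notin> W // conn W E"
    using assms(2) conn_subset[of W E] by (auto simp: quotient_def)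
  ultimately show ?thesis
    using assms by (simp add: ncomp_def conn_insert_isolated finite_quotient conn_subset)
qed

lemma ncomp_le_Suc_ncomp_Diff:
  assumes "finite W" "symp E"
  shows "ncomp W E \<le> Suc (ncomp (W - {a}) E)"
proof -
  obtain Q where Q: "Q \<subseteq> W" "\<And>p q. p \<in> Q \<Longrightarrow> q \<in> Q \<Longrightarrow> (p, q) \<in> conn W E \<Longrightarrow> p = q"
    and "card Q = ncomp W E"
    using ex_transversal[OF conn_equiv[OF assms(2)]] unfolding ncomp_def by metis
  moreover have "card Q \<le> Suc (card (Q - {a}))"
    by (cases "a \<in> Q") (use Q(1) assms(1) finite_subset card_Suc_Diff1 in fastforce)+
  moreover have "card (Q - {a}) \<le> ncomp (W - {a}) E"
    using Q assms conn_mono[of "W - {a}" W E] by (intro card_le_ncomp) auto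
  ultimately show ?thesis by linarith
qed

lemma del_edge_commute: "del_edge E v u = del_edge E u v"
  by (auto simp: del_edge_def insert_commute)

lemma symp_del_edge: "symp E \<Longrightarrow> symp (del_edge E u v)"
  by (auto simp: symp_def del_edge_def insert_commute)

lemma conn_del_edge_eq:
  assumes "symp E" "(u, v) \<in> conn W (del_edge E u v)"
  shows "conn W (del_edge E u v) = conn W E"
proof
  show "conn W (del_edge E u v) \<subseteq> conn W E"
    by (rule conn_subsetI) (auto simp: conn_def del_edge_def)
  show "conn W E \<subseteq> conn W (del_edge E u v)"
  proof (rule conn_subsetI)
    fix x y assume "x \<in> W" "y \<in> W" "E x y"
    then show "(x, y) \<in> conn W (del_edge E u v)"
      using assms conn_sym[OF symp_del_edge[OF assms(1)]]
      by (cases "{x, y} = {u, v}") (auto simp: doubleton_eq_iff conn_def del_edge_def)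
  qed
qed

lemma not_bridge_if_common_neighbour:
  assumes "symp E" "w \<in> W" "w \<noteq> u" "w \<noteq> v" "E u w" "E w v"
  shows "\<not> is_bridge W E u v"
proof
  assume bridge: "is_bridge W E u v"
  let ?P = "\<lambda>a b. a \<in> W \<and> b \<in> W \<and> del_edge E u v a b"
  have "?P u w" "?P w v"
    using assms bridge by (auto simp: is_bridge_def del_edge_def doubleton_eq_iff)
  from \<open>?P w v\<close> have "?P\<^sup>*\<^sup>* w v" by (rule r_into_rtranclp)
  with \<open>?P u w\<close> have "?P\<^sup>*\<^sup>* u v" by (rule converse_rtranclp_into_rtranclp)
  then have "(u, v) \<in> conn W (del_edge E u v)" using bridge by (simp add: conn_def is_bridge_def)
  then have "conn W (del_edge E u v) = conn W E" by (rule conn_del_edge_eq[OF assms(1)])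
  then show False using bridge by (simp add: is_bridge_def ncomp_def)
qed

lemma witness_set_bridge: "witness_set V E t u v S \<Longrightarrow> is_bridge (V - S) E u v"
  by (auto simp: witness_set_def)

lemma witness_set_nonempty:
  "witness_set V E t u v S \<Longrightarrow> S \<noteq> {} \<Longrightarrow> real (card S) / t < real (ncomp (V - S) (del_edge E u v))"
  by (auto simp: witness_set_def)

lemma graph_symp: "graph V E \<Longrightarrow> symp E"
  by (simp add: graph_def symp_def)

lemma split_partitionD:
  assumes "split_partition V E C I"
  shows "V = C \<union> I" "C \<inter> I = {}"
    and "\<And>x y. x \<in> C \<Longrightarrow> y \<in> C \<Longrightarrow> x \<noteq> y \<Longrightarrow> E x y"
    and "\<And>x y. x \<in> I \<Longrightarrow> y \<in> I \<Longrightarrow> \<not> E x y"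
  using assms by (simp_all add: split_partition_def)

lemma split_common_neighbours_subset_witness:
  assumes "graph V E" and sp: "split_partition V E C I" and "u \<in> C" "v \<in> C"
    and bridge: "is_bridge (V - S) E u v"
  shows "(C - {u, v}) \<union> {w \<in> I. E u w \<and> E v w} \<subseteq> S"
proof
  fix w assume w: "w \<in> (C - {u, v}) \<union> {w \<in> I. E u w \<and> E v w}"
  have "symp E" using assms(1) by (rule graph_symp)
  have "w \<in> V" "w \<noteq> u" "w \<noteq> v"
    using w assms(3,4) split_partitionD(1,2)[OF sp] by auto
  moreover have "E u w" "E w v"
    using w assms(3,4) split_partitionD(3)[OF sp] sympD[OF \<open>symp E\<close>] by auto
  ultimately show "w \<in> S"
    using not_bridge_if_common_neighbour[OF \<open>symp E\<close>, of w "V - S"] bridge by blast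
qed

lemma split_ncomp_del_edge_le:
  assumes g: "graph V E" and sp: "split_partition V E C I" and tough: "tough V E t"
    and a: "a \<in> C" and b: "b \<in> C" "a \<noteq> b"
    and S: "S \<subseteq> V" "a \<notin> S" "b \<notin> S" "C - {a, b} \<subseteq> S"
    and x: "x \<in> S" "x \<in> I" "\<not> E b x"
  shows "real (ncomp (V - S) (del_edge E a b)) \<le> real (card S) / t"
proof -
  have "finite V" using g by (simp add: graph_def)
  have "symp E" using g by (rule graph_symp)
  note V = split_partitionD(1,2)[OF sp]
  define T where "T = insert a (S - {x})"
  let ?W = "V - S - {a}"
  have "x \<noteq> a" using x(2) a V(2) by blast
  have VT: "V - T = insert x ?W" using a x(1) V(1) S(1) \<open>x \<noteq> a\<close> by (auto simp: T_def)
  have "x \<notin> ?W" using x(1) by blast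
  have x_isolated: "\<not> E x y \<and> \<not> E y x" if "y \<in> ?W" for y
  proof -
    have "y \<in> I \<or> y = b" using that V(1) S(4) by blast
    then show ?thesis
    proof
      assume "y \<in> I"
      then show ?thesis using x(2) split_partitionD(4)[OF sp] by blast
    next
      assume "y = b"
      then show ?thesis using x(3) \<open>symp E\<close> by (auto dest: sympD)
    qed
  qed
  have "finite (V - S)" "finite ?W" using \<open>finite V\<close> by simp_all
  have ins: "ncomp (V - T) E = Suc (ncomp ?W E)"
    unfolding VT using \<open>finite ?W\<close> \<open>x \<notin> ?W\<close> x_isolated by (rule ncomp_insert_isolated)
  have "ncomp (V - S) (del_edge E a b) \<le> Suc (ncomp ?W (del_edge E a b))"
    using \<open>finite (V - S)\<close> symp_del_edge[OF \<open>symp E\<close>] by (rule ncomp_le_Suc_ncomp_Diff)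
  also have "ncomp ?W (del_edge E a b) = ncomp ?W E"
    by (rule ncomp_cong) (auto simp: del_edge_def doubleton_eq_iff)
  finally have le: "ncomp (V - S) (del_edge E a b) \<le> ncomp (V - T) E"
    unfolding ins .
  have "b \<in> ?W" using b S(1,3) V(1) by blast
  then have "0 < ncomp ?W E" using \<open>finite ?W\<close> by (intro ncomp_pos) auto
  moreover have "T \<subseteq> V" using a V(1) S(1) by (auto simp: T_def)
  ultimately have "cutset V E T" by (simp add: cutset_def ins)
  then have "real (ncomp (V - T) E) \<le> real (card T) / t"
    using tough by (simp add: tough_def)
  moreover have "card T = card S"
  proof -
    have "finite S" using S(1) \<open>finite V\<close> by (rule finite_subset)
    then have "card T = Suc (card (S - {x}))" using S(2) by (simp add: T_def)
    also have "\<dots> = card S" using \<open>finite S\<close> x(1) by (rule card_Suc_Diff1)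
    finally show ?thesis .
  qed
  ultimately show ?thesis using le by simp
qed

lemma split_witness_subset:
  assumes g: "graph V E" and sp: "split_partition V E C I" and tough: "tough V E t"
    and uv: "u \<in> C" "v \<in> C" "u \<noteq> v"
    and S: "S \<subseteq> V" "u \<notin> S" "v \<notin> S" "C - {u, v} \<subseteq> S"
    and many: "real (card S) / t < real (ncomp (V - S) (del_edge E u v))"
  shows "S \<subseteq> (C - {u, v}) \<union> {w \<in> I. E u w \<and> E v w}"
proof (rule subsetI, rule ccontr)
  fix x assume "x \<in> S" and x: "x \<notin> (C - {u, v}) \<union> {w \<in> I. E u w \<and> E v w}"
  then have "x \<in> I" using S(1-3) split_partitionD(1)[OF sp] by blast
  have "real (ncomp (V - S) (del_edge E u v)) \<le> real (card S) / t"
  proof (cases "E v x")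
    case True
    then have "\<not> E u x" using x \<open>x \<in> I\<close> by blast
    moreover have "C - {v, u} \<subseteq> S" using S(4) by blast
    ultimately show ?thesis
      using split_ncomp_del_edge_le[OF g sp tough uv(2,1) uv(3)[symmetric] S(1,3,2) _ \<open>x \<in> S\<close> \<open>x \<in> I\<close>]
      by (simp add: del_edge_commute)
  next
    case False
    then show ?thesis
      using split_ncomp_del_edge_le[OF g sp tough uv S \<open>x \<in> S\<close> \<open>x \<in> I\<close>] by simp
  qed
  with many show False by linarith
qed

theorem mainTheorem4:
  fixes V :: "'a set" and E :: "'a \<Rightarrow> 'a \<Rightarrow> bool" and t :: real
    and C I S :: "'a set" and u v :: 'a
  assumes "graph V E"
    and "t \<in> \<rat>" and "t > 0"
    and "minimally_tough V E t"
    and "split_partition V E C I"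
    and "u \<in> C" and "v \<in> C" and "E u v"
    and "witness_set V E t u v S"
  shows "S = (C - {u, v}) \<union> {w \<in> I. E u w \<and> E v w}"
proof
  have bridge: "is_bridge (V - S) E u v" using assms(9) by (rule witness_set_bridge)
  show superset: "(C - {u, v}) \<union> {w \<in> I. E u w \<and> E v w} \<subseteq> S"
    using assms(1,5-7) bridge by (rule split_common_neighbours_subset_witness)
  show "S \<subseteq> (C - {u, v}) \<union> {w \<in> I. E u w \<and> E v w}"
  proof (cases "S = {}")
    case False
    have "tough V E t" using assms(4) by (simp add: minimally_tough_def toughness_eq_def)
    moreover have "u \<noteq> v" using assms(1,8) by (auto simp: graph_def)
    moreover have "S \<subseteq> V" using assms(9) by (simp add: witness_set_def)
    moreover have "u \<notin> S" "v \<notin> S" using bridge by (auto simp: is_bridge_def)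
    moreover have "C - {u, v} \<subseteq> S" using superset by blast
    ultimately show ?thesis
      using split_witness_subset[OF assms(1,5)] assms(6,7) witness_set_nonempty[OF assms(9) False]
      by blast
  qed simp
qed

end
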